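(* Let \[T:=\tfrac{1}{\sqrt2}(s_1+s_2),\qquad V:=\tfrac{1}{\sqrt2}(s_1-s_2)(s_1s_1^*-s_2s_2^* ),\qquad R:=u+u^*.\] Then the fixed-point algebra $\mathcal{Q}_2^\sigma=\{a\in\mathcal{Q}_2:\sigma(a)=a\}$ satisfies \[\mathcal{Q}_2^\sigma=C^*(T,V,R)=C^*\big(xu^h+\sigma(x)u^{-h}\;:\;x\in\mathcal{O}_2,\ h\in\mathbb{Z}\big).\]
   Context: $\mathcal{Q}_2$ is the universal unital $C^*$-algebra generated by a unitary $u$ and an isometry $s_2$ subject to $s_2u=u^2s_2$ and $s_2s_2^*+us_2s_2^*u^{*}=1$. Put $s_1:=us_2$ and $\mathcal{O}_2:=C^*(s_1,s_2)\subset\mathcal{Q}_2$ (a copy of the Cuntz algebra). Let $\sigma$ be the $^*$-automorphism of $\mathcal{Q}_2$ determined by $\sigma(s_2)=s_1$ and $\sigma(u)=u^*$; it has order 2, satisfies $\sigma(s_1)=s_2$, and restricts to the flip-flop automorphism of $\mathcal{O}_2$ exchanging $s_1$ and $s_2$. *)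

theory Defs
  imports "HOL-Analysis.Analysis"
begin

text \<open>A unital C*-algebra: a real Banach algebra with unit (norm 1 = 1) carrying a
complex scalar multiplication sc extending scaleR, and an involution st satisfying the
C*-identity.\<close>

definition cstar_algebra ::
  "(complex \<Rightarrow> 'a::{banach,real_normed_algebra_1} \<Rightarrow> 'a) \<Rightarrow> ('a \<Rightarrow> 'a) \<Rightarrow> bool"
  where "cstar_algebra sc st \<longleftrightarrow>
    (\<forall>a. sc 1 a = a) \<and>
    (\<forall>c d a. sc c (sc d a) = sc (c * d) a) \<and>
    (\<forall>c a b. sc c (a + b) = sc c a + sc c b) \<and>
    (\<forall>c d a. sc (c + d) a = sc c a + sc d a) \<and>
    (\<forall>r a. sc (complex_of_real r) a = scaleR r a) \<and>
    (\<forall>c a b. sc c (a * b) = sc c a * b \<and> sc c (a * b) = a * sc c b) \<and>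
    (\<forall>c a. norm (sc c a) = cmod c * norm a) \<and>
    (\<forall>a. st (st a) = a) \<and>
    (\<forall>a b. st (a + b) = st a + st b) \<and>
    (\<forall>c a. st (sc c a) = sc (cnj c) (st a)) \<and>
    (\<forall>a b. st (a * b) = st b * st a) \<and>
    (\<forall>a. norm (st a * a) = (norm a)\<^sup>2)"

definition cstar_gen ::
  "(complex \<Rightarrow> 'a::{banach,real_normed_algebra_1} \<Rightarrow> 'a) \<Rightarrow> ('a \<Rightarrow> 'a) \<Rightarrow> 'a set \<Rightarrow> 'a set"
  where "cstar_gen sc st S = \<Inter>{B. S \<subseteq> B \<and> 1 \<in> B \<and> closed B \<and>
     (\<forall>a\<in>B. \<forall>b\<in>B. a + b \<in> B \<and> a * b \<in> B) \<and>
     (\<forall>c. \<forall>a\<in>B. sc c a \<in> B) \<and> (\<forall>a\<in>B. st a \<in> B)}"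

definition star_automorphism ::
  "(complex \<Rightarrow> 'a::{banach,real_normed_algebra_1} \<Rightarrow> 'a) \<Rightarrow> ('a \<Rightarrow> 'a) \<Rightarrow> ('a \<Rightarrow> 'a) \<Rightarrow> bool"
  where "star_automorphism sc st f \<longleftrightarrow> bij f \<and>
    (\<forall>a b. f (a + b) = f a + f b \<and> f (a * b) = f a * f b) \<and>
    (\<forall>c a. f (sc c a) = sc c (f a)) \<and> (\<forall>a. f (st a) = st (f a)) \<and> f 1 = 1"

definition upow :: "('a \<Rightarrow> 'a) \<Rightarrow> 'a::real_normed_algebra_1 \<Rightarrow> int \<Rightarrow> 'a"
  where "upow st u h = (if 0 \<le> h then u ^ nat h else st u ^ nat (- h))"

end

theory Submission
  imports Defs "HOL-Computational_Algebra.Formal_Power_Series"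
begin

(*
  Since sigma is a unital *-endomorphism it is contractive, so a |-> (a + sigma a) / 2 is a
  continuous projection onto the fixed points.  The relation s2 u = u^2 s2 lets powers of u pass
  through *-polynomials in s1, s2, so the finite sums of terms x u^h, with x such a polynomial,
  are dense; their averages are sums of the elements x u^h + sigma(x) u^-h, which therefore
  generate the fixed-point algebra.

  For T, V, R: the self-adjoint unitary W = s1 (st s1) - s2 (st s2) satisfies sigma(W) = -W,
  conjugation by W swaps T and V, and s1, s2 are combinations of T and V W.  Hence every
  polynomial x in s1, s2 is a + b W with a, b polynomials in T, V fixed by sigma, and
    x u^h + sigma(x) u^-h = a (u^h + u^-h) + b W (u^h - u^-h).
  Both brackets lie in the C*-algebra generated by T, V, R by the Chebyshev recursion in
  R = u + st u, started from W (u - st u) = -2 (st V) R T.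
*)

section \<open>The binomial series of the square root\<close>

lemma abs_gbinomial_le_1:
  fixes a :: real
  assumes "0 \<le> a" "a \<le> 1"
  shows "\<bar>a gchoose n\<bar> \<le> 1"
proof (induction n)
  case (Suc n)
  have rec: "a gchoose Suc n = (a - of_nat n) / of_nat (Suc n) * (a gchoose n)"
    using gbinomial_mult_1[of a n] by (simp add: field_simps)
  have "\<bar>(a - of_nat n) / of_nat (Suc n)\<bar> \<le> 1"
    using assms by (simp add: abs_if field_simps)
  then have "\<bar>(a - of_nat n) / of_nat (Suc n) * (a gchoose n)\<bar> \<le> 1 * 1"
    unfolding abs_mult using Suc.IH by (intro mult_mono) auto
  then show ?case
    by (simp add: rec)
qed simp

definition sqrt_coeff :: "nat \<Rightarrow> real"
  where "sqrt_coeff n = (-1) ^ n * ((1/2) gchoose n)"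

lemma abs_sqrt_coeff_le_1: "\<bar>sqrt_coeff n\<bar> \<le> 1"
  using abs_gbinomial_le_1[of "1/2" n] by (simp add: sqrt_coeff_def abs_mult)

lemma sqrt_coeff_convolution:
  "(\<Sum>i\<le>k. sqrt_coeff i * sqrt_coeff (k - i)) = (if k = 0 then 1 else if k = 1 then -1 else 0)"
proof -
  have "(\<Sum>i\<le>k. sqrt_coeff i * sqrt_coeff (k - i))
      = (-1) ^ k * (\<Sum>i=0..k. ((1/2) gchoose i) * ((1/2) gchoose (k - i)))"
    unfolding sum_distrib_left atMost_atLeast0
  proof (rule sum.cong)
    fix i assume "i \<in> {0..k}"
    then have "(-1::real) ^ i * (-1) ^ (k - i) = (-1) ^ k"
      by (simp flip: power_add)
    then show "sqrt_coeff i * sqrt_coeff (k - i) = (-1) ^ k * (((1/2) gchoose i) * ((1/2) gchoose (k - i)))"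
      unfolding sqrt_coeff_def by (metis (no_types, lifting) mult.assoc mult.left_commute)
  qed simp
  also have "\<dots> = (-1) ^ k * ((1::real) gchoose k)"
    using gbinomial_Vandermonde[of "1/2::real" "1/2" k] by simp
  also have "(1::real) gchoose k = of_nat (1 choose k)"
    by (simp add: binomial_gbinomial)
  finally show ?thesis
    by (cases k) (auto simp: binomial_eq_0)
qed

definition sqrt_one_minus :: "'a::{banach,real_normed_algebra_1} \<Rightarrow> 'a"
  where "sqrt_one_minus x = (\<Sum>n. sqrt_coeff n *\<^sub>R x ^ n)"

lemma summable_norm_sqrt_series:
  fixes x :: "'a::{banach,real_normed_algebra_1}"
  assumes "norm x < 1"
  shows "summable (\<lambda>n. norm (sqrt_coeff n *\<^sub>R x ^ n))"
proof (rule summable_comparison_test[OF _ summable_geometric[of "norm x"]])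
  have "norm (sqrt_coeff n *\<^sub>R x ^ n) \<le> 1 * norm x ^ n" for n
    unfolding norm_scaleR
    using abs_sqrt_coeff_le_1[of n] norm_power_ineq[of x n] by (intro mult_mono) auto
  then show "\<exists>N. \<forall>n\<ge>N. norm (norm (sqrt_coeff n *\<^sub>R x ^ n)) \<le> norm x ^ n"
    by simp
qed (use assms in simp)

lemma sqrt_one_minus_square:
  fixes x :: "'a::{banach,real_normed_algebra_1}"
  assumes "norm x < 1"
  shows "sqrt_one_minus x * sqrt_one_minus x = 1 - x"
proof -
  let ?f = "\<lambda>n. sqrt_coeff n *\<^sub>R x ^ n"
  have conv: "(\<Sum>i\<le>k. ?f i * ?f (k - i)) = (if k = 0 then 1 else if k = 1 then - x else 0)" for k
  proof -
    have "(\<Sum>i\<le>k. ?f i * ?f (k - i)) = (\<Sum>i\<le>k. sqrt_coeff i * sqrt_coeff (k - i)) *\<^sub>R x ^ k"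
      unfolding scaleR_sum_left
      by (intro sum.cong) (simp_all flip: power_add)
    then show ?thesis
      by (simp add: sqrt_coeff_convolution)
  qed
  have "sqrt_one_minus x * sqrt_one_minus x = (\<Sum>k. \<Sum>i\<le>k. ?f i * ?f (k - i))"
    unfolding sqrt_one_minus_def
    using Cauchy_product[OF summable_norm_sqrt_series summable_norm_sqrt_series] assms by blast
  also have "\<dots> = (\<Sum>k\<in>{0,1}. \<Sum>i\<le>k. ?f i * ?f (k - i))"
    by (rule suminf_finite) (simp_all only: conv, auto)
  also have "\<dots> = 1 - x"
    unfolding conv by simp
  finally show ?thesis .
qed

lemma sqrt_one_minus_commute:
  fixes x :: "'a::{banach,real_normed_algebra_1}"
  assumes "norm x < 1" and "k * x = x * k"
  shows "k * sqrt_one_minus x = sqrt_one_minus x * k"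
proof -
  have summable: "summable (\<lambda>n. sqrt_coeff n *\<^sub>R x ^ n)"
    using summable_norm_cancel[OF summable_norm_sqrt_series[OF assms(1)]] .
  have "k * x ^ n = x ^ n * k" for n
    by (induction n) (simp_all, metis assms(2) mult.assoc)
  then show ?thesis
    unfolding sqrt_one_minus_def suminf_mult[OF summable, symmetric] suminf_mult2[OF summable]
    by simp
qed

lemma power_sum_recurrence:
  fixes u v :: "'a::ring_1"
  assumes "u * v = 1" and "v * u = 1"
  shows "(u ^ Suc n + v ^ Suc n) * (u + v) = (u ^ Suc (Suc n) + v ^ Suc (Suc n)) + (u ^ n + v ^ n)"
    and "(u ^ Suc n - v ^ Suc n) * (u + v) = (u ^ Suc (Suc n) - v ^ Suc (Suc n)) + (u ^ n - v ^ n)"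
proof -
  have "u ^ Suc n * v = u ^ n" "v ^ Suc n * u = v ^ n"
    using assms by (simp_all add: power_Suc2 mult.assoc del: power_Suc)
  then show "(u ^ Suc n + v ^ Suc n) * (u + v) = (u ^ Suc (Suc n) + v ^ Suc (Suc n)) + (u ^ n + v ^ n)"
    and "(u ^ Suc n - v ^ Suc n) * (u + v) = (u ^ Suc (Suc n) - v ^ Suc (Suc n)) + (u ^ n - v ^ n)"
    by (simp_all add: algebra_simps power_Suc2 del: power_Suc)
qed

section \<open>Unital C*-algebras and their *-endomorphisms\<close>

locale cstar =
  fixes sc :: "complex \<Rightarrow> 'a::{banach,real_normed_algebra_1} \<Rightarrow> 'a" and st :: "'a \<Rightarrow> 'a"
  assumes cstar_algebra: "cstar_algebra sc st"
begin

lemma sc_add: "sc c (a + b) = sc c a + sc c b"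
  and sc_real: "sc (complex_of_real r) a = scaleR r a"
  and sc_sc: "sc c (sc d a) = sc (c * d) a"
  and sc_one: "sc 1 a = a"
  and sc_multL: "sc c (a * b) = sc c a * b"
  and sc_multR: "sc c (a * b) = a * sc c b"
  and norm_sc: "norm (sc c a) = cmod c * norm a"
  and st_st [simp]: "st (st a) = a"
  and st_add: "st (a + b) = st a + st b"
  and st_sc: "st (sc c a) = sc (cnj c) (st a)"
  and st_mult: "st (a * b) = st b * st a"
  and norm_st_mult_self: "norm (st a * a) = (norm a)\<^sup>2"
  using cstar_algebra unfolding cstar_algebra_def by fast+

lemma norm_st [simp]: "norm (st a) = norm a"
proof -
  have le: "norm b \<le> norm (st b)" for b
  proof (cases "norm b = 0")
    case False
    have "(norm b)\<^sup>2 \<le> norm (st b) * norm b"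
      using norm_st_mult_self[of b] norm_mult_ineq[of "st b" b] by simp
    with False show ?thesis
      by (simp add: power2_eq_square)
  qed simp
  show ?thesis
    using le[of a] le[of "st a"] by simp
qed

lemma st_scaleR: "st (scaleR r a) = scaleR r (st a)"
  using st_sc[of "complex_of_real r" a] by (simp add: sc_real)

lemma bounded_linear_st: "bounded_linear st"
  by (rule bounded_linear_intro[where K = 1]) (simp_all add: st_add st_scaleR)

lemma bounded_linear_sc: "bounded_linear (sc c)"
  by (rule bounded_linear_intro[where K = "cmod c"])
     (simp_all add: sc_add norm_sc sc_sc mult.commute flip: sc_real)

lemma st_zero [simp]: "st 0 = 0"
  and st_minus: "st (- a) = - st a"
  and st_diff: "st (a - b) = st a - st b"
  and sc_zero [simp]: "sc c 0 = 0"
  and sc_minus: "sc c (- a) = - sc c a"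
  using bounded_linear.linear[OF bounded_linear_st] bounded_linear.linear[OF bounded_linear_sc]
  by (simp_all add: linear_0 linear_neg linear_diff)

lemma st_one [simp]: "st 1 = 1"
  using st_mult[of "st 1" 1] by simp

lemma st_power: "st (a ^ n) = st a ^ n"
  by (induction n) (simp_all add: st_mult power_commutes)

lemma sc_minus_left: "sc (- c) a = - sc c a"
  using sc_sc[of "-1" c a] sc_real[of "-1" "sc c a"] by simp

definition unitary :: "'a \<Rightarrow> bool"
  where "unitary w \<longleftrightarrow> st w * w = 1 \<and> w * st w = 1"

lemma norm_isometry: "st w * w = 1 \<Longrightarrow> norm w = 1"
  using norm_st_mult_self[of w] norm_ge_zero[of w] by (simp add: power2_eq_1_iff)

lemma st_sqrt_one_minus:
  assumes "norm x < 1" and "st x = x"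
  shows "st (sqrt_one_minus x) = sqrt_one_minus x"
  unfolding sqrt_one_minus_def
  using bounded_linear.suminf[OF bounded_linear_st summable_norm_cancel[OF summable_norm_sqrt_series[OF assms(1)]]]
  by (simp add: st_scaleR st_power assms(2))

text \<open>The unitary is \<open>k + i \<surd>(1 - k\<^sup>2)\<close>; its adjoint has the same form with \<open>-\<surd>(1 - k\<^sup>2)\<close>.\<close>

lemma selfadjoint_eq_real_part_unitary:
  assumes sa: "st k = k" and norm: "norm k < 1"
  obtains w where "unitary w" and "k = (1/2) *\<^sub>R (w + st w)"
proof -
  have "norm (k * k) \<le> norm k * norm k"
    by (rule norm_mult_ineq)
  also have "\<dots> < 1"
    using norm by (simp add: abs_square_less_1 flip: power2_eq_square)
  finally have norm_kk: "norm (k * k) < 1" .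
  define c where "c = sqrt_one_minus (k * k)"
  have st_c: "st c = c" and cc: "c * c = 1 - k * k" and kc: "k * c = c * k"
    using st_sqrt_one_minus[OF norm_kk] sqrt_one_minus_square[OF norm_kk]
      sqrt_one_minus_commute[OF norm_kk, of k]
    by (simp_all add: c_def st_mult sa mult.assoc)
  have isometry: "st (k + sc \<i> d) * (k + sc \<i> d) = 1" if "d = c \<or> d = - c" for d
  proof -
    have d: "st d = d" "d * d = 1 - k * k" "k * d = d * k"
      using that st_c cc kc by (auto simp: st_minus)
    have "st (k + sc \<i> d) * (k + sc \<i> d) = k * k + (k * sc \<i> d - sc \<i> d * k) - sc \<i> d * sc \<i> d"
      by (simp add: st_add st_sc sa d(1) sc_minus_left algebra_simps)
    also have "k * sc \<i> d - sc \<i> d * k = 0"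
      by (simp flip: sc_multR sc_multL add: d(3))
    also have "sc \<i> d * sc \<i> d = - (d * d)"
      by (simp flip: sc_multR sc_multL add: sc_sc sc_minus_left sc_one)
    finally show ?thesis
      by (simp add: d(2))
  qed
  define w where "w = k + sc \<i> c"
  have st_w: "st w = k + sc \<i> (- c)"
    by (simp add: w_def st_add st_sc sa st_c sc_minus sc_minus_left)
  have "st w * w = 1"
    using isometry[of c] by (simp add: w_def)
  moreover have "w * st w = 1"
    using isometry[of "- c"] by (simp flip: st_w)
  ultimately have "unitary w"
    unfolding unitary_def ..
  moreover have "k = (1/2) *\<^sub>R (w + st w)"
    unfolding st_w by (simp add: w_def sc_minus flip: scaleR_2)
  ultimately show ?thesis ..
qed

definition star_subalgebra :: "'a set \<Rightarrow> bool"
  where "star_subalgebra B \<longleftrightarrow> 1 \<in> B \<and> (\<forall>a\<in>B. \<forall>b\<in>B. a + b \<in> B \<and> a * b \<in> B) \<and>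
    (\<forall>c. \<forall>a\<in>B. sc c a \<in> B) \<and> (\<forall>a\<in>B. st a \<in> B)"

definition cstar_subalgebra :: "'a set \<Rightarrow> bool"
  where "cstar_subalgebra B \<longleftrightarrow> star_subalgebra B \<and> closed B"

context
  fixes B assumes B: "star_subalgebra B"
begin

lemma star_subalgebra_one: "1 \<in> B"
  and star_subalgebra_add: "a \<in> B \<Longrightarrow> b \<in> B \<Longrightarrow> a + b \<in> B"
  and star_subalgebra_mult: "a \<in> B \<Longrightarrow> b \<in> B \<Longrightarrow> a * b \<in> B"
  and star_subalgebra_sc: "a \<in> B \<Longrightarrow> sc c a \<in> B"
  and star_subalgebra_st: "a \<in> B \<Longrightarrow> st a \<in> B"
  using B unfolding star_subalgebra_def by blast+

lemma star_subalgebra_scaleR: "a \<in> B \<Longrightarrow> r *\<^sub>R a \<in> B"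
  using star_subalgebra_sc[of a "complex_of_real r"] by (simp add: sc_real)

lemma star_subalgebra_zero: "0 \<in> B"
  using star_subalgebra_scaleR[OF star_subalgebra_one, of 0] by simp

lemma star_subalgebra_diff: "a \<in> B \<Longrightarrow> b \<in> B \<Longrightarrow> a - b \<in> B"
  using star_subalgebra_add[of a "(-1) *\<^sub>R b"] star_subalgebra_scaleR[of b "-1"] by simp

end

lemma star_subalgebra_closure:
  assumes "star_subalgebra B"
  shows "cstar_subalgebra (closure B)"
proof -
  have binary: "f a b \<in> closure B"
    if "continuous_on UNIV (\<lambda>p. f (fst p) (snd p))" "\<And>a b. a \<in> B \<Longrightarrow> b \<in> B \<Longrightarrow> f a b \<in> B"
      "a \<in> closure B" "b \<in> closure B" for f a b
  proof -
    have "(\<lambda>p. f (fst p) (snd p)) ` closure (B \<times> B) \<subseteq> closure B"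
      using that(1,2) by (intro image_closure_subset) (auto intro: continuous_on_subset closure_subset[THEN subsetD])
    with that(3,4) show ?thesis
      by (force simp: closure_Times)
  qed
  have unary: "f a \<in> closure B"
    if "bounded_linear f" "\<And>a. a \<in> B \<Longrightarrow> f a \<in> B" "a \<in> closure B" for f a
  proof -
    have "f ` closure B \<subseteq> closure B"
      using that(1,2) by (intro image_closure_subset) (auto intro: linear_continuous_on closure_subset[THEN subsetD])
    with that(3) show ?thesis
      by blast
  qed
  show ?thesis
    unfolding cstar_subalgebra_def star_subalgebra_def
  proof (intro conjI ballI allI)
    show "1 \<in> closure B"
      using closure_subset star_subalgebra_one[OF assms] by blast
    fix a b assume ab: "a \<in> closure B" "b \<in> closure B"
    have "continuous_on UNIV (\<lambda>p::'a \<times> 'a. fst p + snd p)"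
      by (intro continuous_intros)
    from binary[OF this star_subalgebra_add[OF assms] ab] show "a + b \<in> closure B" .
    have "continuous_on UNIV (\<lambda>p::'a \<times> 'a. fst p * snd p)"
      by (intro continuous_intros)
    from binary[OF this star_subalgebra_mult[OF assms] ab] show "a * b \<in> closure B" .
  next
    fix c a assume "a \<in> closure B"
    with bounded_linear_sc star_subalgebra_sc[OF assms] show "sc c a \<in> closure B"
      by (rule unary)
  next
    fix a assume "a \<in> closure B"
    with bounded_linear_st star_subalgebra_st[OF assms] show "st a \<in> closure B"
      by (rule unary)
  qed simp
qed

lemma cstar_gen_eq: "cstar_gen sc st S = \<Inter>{B. S \<subseteq> B \<and> cstar_subalgebra B}"
  unfolding cstar_gen_def cstar_subalgebra_def star_subalgebra_def by blast

lemma cstar_subalgebra_cstar_gen: "cstar_subalgebra (cstar_gen sc st S)"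
  unfolding cstar_gen_eq cstar_subalgebra_def star_subalgebra_def by (auto intro: closed_Inter)

lemma star_subalgebra_cstar_gen: "star_subalgebra (cstar_gen sc st S)"
  using cstar_subalgebra_cstar_gen unfolding cstar_subalgebra_def ..

lemma cstar_gen_superset: "S \<subseteq> cstar_gen sc st S"
  unfolding cstar_gen_eq by blast

lemma cstar_gen_generator: "a \<in> S \<Longrightarrow> a \<in> cstar_gen sc st S"
  using cstar_gen_superset by blast

lemma cstar_gen_minimal: "S \<subseteq> B \<Longrightarrow> cstar_subalgebra B \<Longrightarrow> cstar_gen sc st S \<subseteq> B"
  unfolding cstar_gen_eq by blast

inductive_set star_alg :: "'a set \<Rightarrow> 'a set" for S :: "'a set"
where
  generator: "a \<in> S \<Longrightarrow> a \<in> star_alg S"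
| one: "1 \<in> star_alg S"
| add: "a \<in> star_alg S \<Longrightarrow> b \<in> star_alg S \<Longrightarrow> a + b \<in> star_alg S"
| mult: "a \<in> star_alg S \<Longrightarrow> b \<in> star_alg S \<Longrightarrow> a * b \<in> star_alg S"
| sc: "a \<in> star_alg S \<Longrightarrow> sc c a \<in> star_alg S"
| st: "a \<in> star_alg S \<Longrightarrow> st a \<in> star_alg S"

lemma star_subalgebra_star_alg: "star_subalgebra (star_alg S)"
  unfolding star_subalgebra_def by (auto intro: star_alg.intros)

lemma star_alg_minimal:
  assumes "S \<subseteq> B" and "star_subalgebra B"
  shows "star_alg S \<subseteq> B"
proof
  show "a \<in> B" if "a \<in> star_alg S" for a
    using that by induction
      (use assms in \<open>auto intro: star_subalgebra_one star_subalgebra_add star_subalgebra_mult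
        star_subalgebra_sc star_subalgebra_st\<close>)
qed

lemma star_alg_subset_cstar_gen: "star_alg S \<subseteq> cstar_gen sc st S"
  by (rule star_alg_minimal[OF cstar_gen_superset star_subalgebra_cstar_gen])

lemma upow_0 [simp]: "upow st u 0 = 1"
  and upow_1 [simp]: "upow st u 1 = u"
  by (simp_all add: upow_def)

context
  fixes u assumes u: "unitary u"
begin

lemma upow_succ: "upow st u (h + 1) = upow st u h * u"
proof (cases "0 \<le> h")
  case True
  then have "nat (h + 1) = Suc (nat h)"
    by simp
  with True show ?thesis
    by (simp add: upow_def power_commutes)
next
  case False
  show ?thesis
  proof (cases "h = -1")
    case True
    then show ?thesis
      using u by (simp add: upow_def unitary_def)
  next
    case False': False
    then have "nat (- h) = Suc (nat (- (h + 1)))" "\<not> 0 \<le> h + 1"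
      using False by simp_all
    moreover have "st u ^ Suc n * u = st u ^ n" for n
      using u by (simp add: unitary_def power_Suc2 mult.assoc del: power_Suc)
    ultimately show ?thesis
      using False by (simp add: upow_def del: power_Suc)
  qed
qed

lemma upow_pred: "upow st u (h - 1) = upow st u h * st u"
  using upow_succ[of "h - 1"] u by (simp add: unitary_def mult.assoc)

lemma upow_add: "upow st u (h + k) = upow st u h * upow st u k"
proof (induction k rule: int_induct[where k = 0])
  case (step1 i)
  then show ?case
    using upow_succ[of "h + i"] upow_succ[of i] by (simp add: add.assoc mult.assoc)
next
  case (step2 i)
  then show ?case
    using upow_pred[of "h + i"] upow_pred[of i] by (simp add: algebra_simps)
qed simp

end

lemma st_upow: "st (upow st u h) = upow st u (- h)"
  by (cases "h = 0") (auto simp: upow_def st_power)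

lemma upow_st: "upow st (st u) h = upow st u (- h)"
  by (cases "h = 0") (auto simp: upow_def)

lemma power_sum_diff_mem:
  assumes B: "star_subalgebra B" and u: "unitary u"
    and R: "u + st u \<in> B" and D: "w * (u - st u) \<in> B"
  shows "u ^ n + st u ^ n \<in> B \<and> w * (u ^ n - st u ^ n) \<in> B"
proof (induction n rule: induct_nat_012)
  case 0
  show ?case
    using star_subalgebra_add[OF B star_subalgebra_one[OF B] star_subalgebra_one[OF B]]
      star_subalgebra_zero[OF B] by simp
next
  case 1
  show ?case
    using R D by simp
next
  case (ge2 n)
  have "u * st u = 1" "st u * u = 1"
    using u by (simp_all add: unitary_def)
  note rec = power_sum_recurrence[OF this, of n]
  have "u ^ Suc (Suc n) + st u ^ Suc (Suc n) = (u ^ Suc n + st u ^ Suc n) * (u + st u) - (u ^ n + st u ^ n)"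
    by (simp only: eq_diff_eq rec(1))
  moreover have "w * (u ^ Suc (Suc n) - st u ^ Suc (Suc n))
      = w * (u ^ Suc n - st u ^ Suc n) * (u + st u) - w * (u ^ n - st u ^ n)"
    by (simp only: eq_diff_eq mult.assoc rec(2) flip: distrib_left)
  ultimately show ?case
    using ge2 R by (simp add: star_subalgebra_diff[OF B] star_subalgebra_mult[OF B])
qed

lemma upow_sum_diff_mem:
  assumes "star_subalgebra B" and "unitary u"
    and "u + st u \<in> B" and "w * (u - st u) \<in> B"
  shows "upow st u h + upow st u (- h) \<in> B" and "w * (upow st u h - upow st u (- h)) \<in> B"
proof -
  note mem = power_sum_diff_mem[OF assms]
  show "upow st u h + upow st u (- h) \<in> B"
    using mem[of "nat \<bar>h\<bar>"] by (cases "h = 0") (auto simp: upow_def add.commute)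
  show "w * (upow st u h - upow st u (- h)) \<in> B"
  proof (cases "0 \<le> h")
    case True
    then show ?thesis
      using mem[of "nat h"] by (cases "h = 0") (auto simp: upow_def)
  next
    case False
    then have "w * (upow st u h - upow st u (- h)) = - (w * (u ^ nat (- h) - st u ^ nat (- h)))"
      by (simp add: upow_def algebra_simps)
    then show ?thesis
      using mem[of "nat (- h)"] star_subalgebra_diff[OF assms(1) star_subalgebra_zero[OF assms(1)]]
      by simp
  qed
qed

end

locale star_endo = cstar +
  fixes f :: "'a \<Rightarrow> 'a"
  assumes hom_add: "f (a + b) = f a + f b"
    and hom_mult: "f (a * b) = f a * f b"
    and hom_sc: "f (sc c a) = sc c (f a)"
    and hom_st: "f (st a) = st (f a)"
    and hom_one [simp]: "f 1 = 1"
begin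

lemma hom_scaleR: "f (r *\<^sub>R a) = r *\<^sub>R f a"
  using hom_sc[of "complex_of_real r" a] by (simp add: sc_real)

lemma linear_hom: "linear f"
  by (rule linearI) (simp_all add: hom_add hom_scaleR)

lemma hom_zero [simp]: "f 0 = 0"
  and hom_diff: "f (a - b) = f a - f b"
  using linear_hom by (simp_all add: linear_0 linear_diff)

lemma hom_power: "f (a ^ n) = f a ^ n"
  by (induction n) (simp_all add: hom_mult)

lemma hom_upow: "f (upow st u h) = upow st (f u) h"
  by (simp add: upow_def hom_power hom_st)

lemma hom_unitary: "unitary w \<Longrightarrow> unitary (f w)"
  unfolding unitary_def by (metis hom_mult hom_one hom_st)

lemma norm_hom_selfadjoint_le:
  assumes sa: "st k = k"
  shows "norm (f k) \<le> norm k"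
proof (rule field_le_epsilon)
  fix e :: real assume "e > 0"
  define t where "t = norm k + e"
  have t: "t > 0" "norm k < t"
    using \<open>e > 0\<close> norm_ge_zero[of k] unfolding t_def by linarith+
  have "st ((1/t) *\<^sub>R k) = (1/t) *\<^sub>R k" "norm ((1/t) *\<^sub>R k) < 1"
    using t by (simp_all add: st_scaleR sa field_simps)
  then obtain w where w: "unitary w" and k: "(1/t) *\<^sub>R k = (1/2) *\<^sub>R (w + st w)"
    by (rule selfadjoint_eq_real_part_unitary)
  have "norm (f w) = 1"
    using hom_unitary[OF w] unfolding unitary_def by (blast intro: norm_isometry)
  have "(1/t) * norm (f k) = norm (f ((1/t) *\<^sub>R k))"
    using t by (simp add: hom_scaleR)
  also have "\<dots> = (1/2) * norm (f w + st (f w))"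
    by (simp add: k hom_scaleR hom_add hom_st)
  also have "\<dots> \<le> 1"
    using norm_triangle_ineq[of "f w" "st (f w)"] \<open>norm (f w) = 1\<close> by simp
  finally show "norm (f k) \<le> norm k + e"
    using t by (simp add: t_def field_simps)
qed

lemma norm_hom_le: "norm (f a) \<le> norm a"
proof -
  have "(norm (f a))\<^sup>2 = norm (f (st a * a))"
    by (simp add: hom_mult hom_st norm_st_mult_self)
  also have "\<dots> \<le> norm (st a * a)"
    by (rule norm_hom_selfadjoint_le) (simp add: st_mult)
  also have "\<dots> = (norm a)\<^sup>2"
    by (rule norm_st_mult_self)
  finally show ?thesis
    by (simp add: power2_le_iff_abs_le)
qed

lemma bounded_linear_hom: "bounded_linear f"
  by (rule bounded_linear_intro[where K = 1]) (simp_all add: hom_add hom_scaleR norm_hom_le)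

lemma cstar_subalgebra_fixed_points: "cstar_subalgebra {a. f a = a}"
  unfolding cstar_subalgebra_def star_subalgebra_def
  using bounded_linear_hom
  by (auto simp: hom_add hom_mult hom_sc hom_st
      intro!: closed_Collect_eq linear_continuous_on continuous_on_id)

lemma hom_star_alg: "a \<in> star_alg S \<Longrightarrow> f a \<in> star_alg (f ` S)"
  by (induction rule: star_alg.induct)
    (auto simp: hom_add hom_mult hom_sc hom_st intro: star_alg.intros)

lemma fixed_point_mem:
  assumes B: "cstar_subalgebra B" and dense: "closure D = UNIV"
    and avg: "\<And>d. d \<in> D \<Longrightarrow> d + f d \<in> B" and fixed: "f a = a"
  shows "a \<in> B"
proof -
  have "continuous_on (closure D) (\<lambda>a. a + f a)"
    by (intro continuous_on_add continuous_on_id linear_continuous_on bounded_linear_hom)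
  then have "(\<lambda>a. a + f a) ` closure D \<subseteq> B"
    using B avg unfolding cstar_subalgebra_def by (intro image_closure_subset) auto
  then have "a + f a \<in> B"
    using dense by blast
  then have "a + a \<in> B"
    using fixed by simp
  then have "(1/2) *\<^sub>R (a + a) \<in> B"
    using B unfolding cstar_subalgebra_def by (blast intro: star_subalgebra_scaleR)
  then show ?thesis
    by (simp flip: scaleR_2)
qed

end

context cstar
begin

lemma star_endo_comp:
  assumes "star_endo sc st f" and "star_endo sc st g"
  shows "star_endo sc st (f \<circ> g)"
proof -
  interpret f: star_endo sc st f by fact
  interpret g: star_endo sc st g by fact
  show ?thesis
    by unfold_locales (simp_all add: f.hom_add g.hom_add f.hom_mult g.hom_mult f.hom_sc g.hom_sc f.hom_st g.hom_st)
qed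

lemma star_endo_if_star_automorphism:
  assumes "star_automorphism sc st f"
  shows "star_endo sc st f"
  using assms unfolding star_automorphism_def by unfold_locales blast+

lemma star_endo_conj:
  assumes "st w = w" and "w * w = 1"
  shows "star_endo sc st (\<lambda>a. w * a * w)"
proof unfold_locales
  show "w * (a * b) * w = w * a * w * (w * b * w)" for a b
    by (simp add: mult.assoc assms(2) flip: mult.assoc[of w w])
  show "w * st a * w = st (w * a * w)" for a
    by (simp add: st_mult assms(1) mult.assoc)
qed (simp_all add: algebra_simps assms(2) flip: sc_multL sc_multR)

end

section \<open>The algebra Q2 and its fixed points\<close>

locale Q2 = star_endo sc st \<sigma>
  for sc :: "complex \<Rightarrow> 'a::{banach,real_normed_algebra_1} \<Rightarrow> 'a" and st \<sigma> +
  fixes u s2 :: 'a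
  assumes unitary_u: "unitary u"
    and isometry_s2: "st s2 * s2 = 1"
    and s2_u: "s2 * u = u ^ 2 * s2"
    and range_projections_sum: "s2 * st s2 + u * s2 * st s2 * st u = 1"
    and \<sigma>_s2: "\<sigma> s2 = u * s2"
    and \<sigma>_u: "\<sigma> u = st u"
    and generated: "cstar_gen sc st {u, s2} = UNIV"
begin

definition s1 :: 'a where "s1 = u * s2"
definition W :: 'a where "W = s1 * st s1 - s2 * st s2"
definition T :: 'a where "T = (1 / sqrt 2) *\<^sub>R (s1 + s2)"
definition V :: 'a where "V = (1 / sqrt 2) *\<^sub>R ((s1 - s2) * W)"
definition R :: 'a where "R = u + st u"

abbreviation O2_alg :: "'a set" where "O2_alg \<equiv> star_alg {s1, s2}"
abbreviation TV_alg :: "'a set" where "TV_alg \<equiv> star_alg {T, V}"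

lemma st_u_u: "st u * u = 1" and u_st_u: "u * st u = 1"
  using unitary_u by (simp_all add: unitary_def)

lemma isometry_s1: "st s1 * s1 = 1"
  by (simp add: s1_def st_mult mult.assoc isometry_s2 flip: mult.assoc[of "st u"] add: st_u_u)

lemma cuntz_relation: "s1 * st s1 + s2 * st s2 = 1"
  using range_projections_sum by (simp add: s1_def st_mult mult.assoc add.commute)

lemma st_s2_s1: "st s2 * s1 = 0"
proof -
  have "st (st s2 * s1) * (st s2 * s1) = st s1 * (s2 * st s2) * s1"
    by (simp add: st_mult mult.assoc)
  also have "s2 * st s2 = 1 - s1 * st s1"
    using cuntz_relation by (simp add: eq_diff_eq add.commute)
  also have "st s1 * (1 - s1 * st s1) * s1 = 0"
    by (simp add: algebra_simps isometry_s1)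
  finally show ?thesis
    using norm_st_mult_self[of "st s2 * s1"] by simp
qed

lemma st_s1_s2: "st s1 * s2 = 0"
  using arg_cong[OF st_s2_s1, of st] by (simp add: st_mult)

lemma st_W: "st W = W"
  by (simp add: W_def st_diff st_mult)

lemma W_W: "W * W = 1"
proof -
  have "W * W = s1 * (st s1 * s1) * st s1 - s1 * (st s1 * s2) * st s2
      - s2 * (st s2 * s1) * st s1 + s2 * (st s2 * s2) * st s2"
    by (simp add: W_def algebra_simps)
  also have "\<dots> = 1"
    by (simp add: isometry_s1 isometry_s2 st_s1_s2 st_s2_s1 cuntz_relation)
  finally show ?thesis .
qed

lemma W_s1: "W * s1 = s1" and W_s2: "W * s2 = - s2"
  by (simp_all add: W_def algebra_simps isometry_s1 isometry_s2 st_s1_s2 st_s2_s1)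

lemma W_T_W: "W * T * W = V"
  by (simp add: T_def V_def algebra_simps W_s1 W_s2)

lemma W_V_W: "W * V * W = T"
  by (simp add: T_def V_def algebra_simps W_s1 W_s2 W_W flip: mult.assoc[of _ W W])

lemma s1_eq: "s1 = (1 / sqrt 2) *\<^sub>R (T + V * W)"
  and s2_eq: "s2 = (1 / sqrt 2) *\<^sub>R (T - V * W)"
  by (simp_all add: T_def V_def mult.assoc W_W algebra_simps flip: scaleR_2)

lemma \<sigma>_s1: "\<sigma> s1 = s2"
  by (simp add: s1_def hom_mult \<sigma>_u \<sigma>_s2 st_u_u flip: mult.assoc)

lemma \<sigma>_W: "\<sigma> W = - W"
  by (simp add: W_def hom_diff hom_mult hom_st \<sigma>_s1 \<sigma>_s2 flip: s1_def)

lemma \<sigma>_T: "\<sigma> T = T" and \<sigma>_V: "\<sigma> V = V" and \<sigma>_R: "\<sigma> R = R"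
  by (simp_all add: T_def V_def R_def hom_scaleR hom_add hom_diff hom_mult hom_st \<sigma>_s1 \<sigma>_W \<sigma>_u \<sigma>_s2
      algebra_simps flip: s1_def)

lemma \<sigma>_upow: "\<sigma> (upow st u h) = upow st u (- h)"
  by (simp add: hom_upow \<sigma>_u upow_st)

lemma upow_double_mult_s2: "upow st u (2 * k) * s2 = s2 * upow st u k"
proof (induction k rule: int_induct[where k = 0])
  case (step1 i)
  have "upow st u (2 * (i + 1)) = upow st u (2 * i) * upow st u 2"
    using upow_add[OF unitary_u, of "2 * i" 2] by (simp add: algebra_simps)
  then have "upow st u (2 * (i + 1)) * s2 = upow st u (2 * i) * (u * u * s2)"
    by (simp add: upow_def power2_eq_square mult.assoc)
  also have "u * u * s2 = s2 * u"
    by (simp add: s2_u power2_eq_square)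
  also have "upow st u (2 * i) * (s2 * u) = s2 * upow st u (i + 1)"
    using step1 upow_succ[OF unitary_u, of i] by (simp flip: mult.assoc)
  finally show ?case .
next
  case (step2 i)
  have "upow st u (2 * (i - 1)) = upow st u (2 * i) * st u * st u"
    using upow_pred[OF unitary_u, of "2 * i"] upow_pred[OF unitary_u, of "2 * i - 1"]
    by (simp add: algebra_simps)
  then have "upow st u (2 * (i - 1)) * s2 = upow st u (2 * i) * (st u * st u * s2)"
    by (simp add: mult.assoc)
  also have "st u * st u * s2 = s2 * st u"
  proof -
    have "st u * st u * (s2 * u) * st u = st u * st u * u * u * s2 * st u"
      by (simp add: s2_u power2_eq_square mult.assoc)
    then show ?thesis
      by (simp add: mult.assoc u_st_u st_u_u flip: mult.assoc[of "st u" u])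
  qed
  also have "upow st u (2 * i) * (s2 * st u) = s2 * upow st u (i - 1)"
    using step2 upow_pred[OF unitary_u, of i] by (simp flip: mult.assoc)
  finally show ?case .
qed simp

lemma upow_odd_mult_s2: "upow st u (2 * k + 1) * s2 = s1 * upow st u k"
  using upow_add[OF unitary_u, of 1 "2 * k"]
  by (simp add: add.commute mult.assoc upow_double_mult_s2 s1_def)

lemma upow_mult_s1: "upow st u h * s1 = upow st u (h + 1) * s2"
  by (simp add: s1_def upow_succ[OF unitary_u] mult.assoc)

lemma upow_mult_st_s2: "upow st u h * st s2 = st s2 * upow st u (2 * h)"
  using arg_cong[OF upow_double_mult_s2[of "- h"], of st] by (simp add: st_mult st_upow)

lemma upow_mult_st_s1: "upow st u h * st s1 = st s2 * upow st u (2 * h - 1)"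
  using upow_pred[OF unitary_u, of "2 * h"]
  by (simp add: s1_def st_mult upow_mult_st_s2 flip: mult.assoc)

inductive_set laurent_O2 :: "'a set"
where
  zero: "0 \<in> laurent_O2"
| monomial: "x \<in> O2_alg \<Longrightarrow> x * upow st u h \<in> laurent_O2"
| add: "a \<in> laurent_O2 \<Longrightarrow> b \<in> laurent_O2 \<Longrightarrow> a + b \<in> laurent_O2"

lemma laurent_O2_sc: "a \<in> laurent_O2 \<Longrightarrow> sc c a \<in> laurent_O2"
  by (induction rule: laurent_O2.induct) (auto simp: sc_add sc_multL intro: laurent_O2.intros star_alg.sc)

lemma laurent_O2_mult_left: "a \<in> laurent_O2 \<Longrightarrow> x \<in> O2_alg \<Longrightarrow> x * a \<in> laurent_O2"
proof (induction rule: laurent_O2.induct)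
  case (monomial y h)
  then show ?case
    using laurent_O2.monomial[of "x * y" h] by (simp add: mult.assoc star_alg.mult)
qed (auto simp: distrib_left intro: laurent_O2.intros)

lemma laurent_O2_mult_upow: "a \<in> laurent_O2 \<Longrightarrow> a * upow st u k \<in> laurent_O2"
proof (induction rule: laurent_O2.induct)
  case (monomial x h)
  then show ?case
    using laurent_O2.monomial[of x "h + k"] by (simp add: mult.assoc upow_add[OF unitary_u])
qed (auto simp: distrib_right intro: laurent_O2.intros)

lemma laurent_O2_mult_right:
  "z \<in> laurent_O2 \<Longrightarrow> (\<And>h. upow st u h * b \<in> laurent_O2) \<Longrightarrow> z * b \<in> laurent_O2"
proof (induction rule: laurent_O2.induct)
  case (monomial x h)
  then show ?case
    using laurent_O2_mult_left[of "upow st u h * b" x] by (simp add: mult.assoc)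
qed (auto simp: distrib_right intro: laurent_O2.intros)

lemma upow_mult_s2_mem: "upow st u h * s2 \<in> laurent_O2"
proof (cases "even h")
  case True
  then obtain k where "h = 2 * k"
    by blast
  then show ?thesis
    by (simp add: upow_double_mult_s2 laurent_O2.monomial star_alg.generator)
next
  case False
  then obtain k where "h = 2 * k + 1"
    using oddE by blast
  then show ?thesis
    by (simp add: upow_odd_mult_s2 laurent_O2.monomial star_alg.generator)
qed

text \<open>The commutation relations of \<open>u\<close> with \<open>s\<^sub>1, s\<^sub>2\<close> and their adjoints move powers of \<open>u\<close>
  to the right through \<open>O2_alg\<close>; the adjoint is carried along so that the set below is closed
  under \<open>st\<close>.\<close>

lemma upow_mult_O2_alg_mem:
  assumes "y \<in> O2_alg"
  shows "upow st u h * y \<in> laurent_O2"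
proof -
  let ?D = "{y. \<forall>h. upow st u h * y \<in> laurent_O2 \<and> upow st u h * st y \<in> laurent_O2}"
  have one: "upow st u h \<in> laurent_O2" for h
    using laurent_O2.monomial[OF star_alg.one, of h] by simp
  have "{s1, s2} \<subseteq> ?D"
    by (auto simp: upow_mult_s1 upow_mult_s2_mem upow_mult_st_s1 upow_mult_st_s2
        intro: laurent_O2.monomial star_alg.st star_alg.generator)
  moreover have "star_subalgebra ?D"
    unfolding star_subalgebra_def
  proof (intro conjI ballI allI)
    show "1 \<in> ?D"
      by (simp add: one)
    fix a b assume a: "a \<in> ?D" and b: "b \<in> ?D"
    then show "a + b \<in> ?D"
      by (simp add: distrib_left st_add laurent_O2.add)
    have "upow st u h * (a * b) \<in> laurent_O2" "upow st u h * st (a * b) \<in> laurent_O2" for h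
      using laurent_O2_mult_right[of "upow st u h * a" b] laurent_O2_mult_right[of "upow st u h * st b" "st a"]
        a b by (simp_all add: mult.assoc st_mult)
    then show "a * b \<in> ?D"
      by blast
  next
    fix c a assume "a \<in> ?D"
    then show "sc c a \<in> ?D"
      by (simp add: st_sc laurent_O2_sc flip: sc_multR)
  next
    fix a assume "a \<in> ?D"
    then show "st a \<in> ?D"
      by simp
  qed
  ultimately show ?thesis
    using star_alg_minimal assms by blast
qed

lemma star_subalgebra_laurent_O2: "star_subalgebra laurent_O2"
  unfolding star_subalgebra_def
proof (intro conjI ballI allI)
  show "1 \<in> laurent_O2"
    using laurent_O2.monomial[OF star_alg.one, of 0] by simp
  fix a b assume a: "a \<in> laurent_O2" and b: "b \<in> laurent_O2"
  then show "a + b \<in> laurent_O2"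
    by (rule laurent_O2.add)
  from b a show "a * b \<in> laurent_O2"
  proof (induction rule: laurent_O2.induct)
    case (monomial x h)
    then have "a * x \<in> laurent_O2"
      using laurent_O2_mult_right upow_mult_O2_alg_mem by blast
    then show ?case
      using laurent_O2_mult_upow[of "a * x" h] by (simp add: mult.assoc)
  qed (auto simp: distrib_left intro: laurent_O2.intros)
next
  fix c a assume "a \<in> laurent_O2"
  then show "sc c a \<in> laurent_O2"
    by (rule laurent_O2_sc)
next
  fix a assume "a \<in> laurent_O2"
  then show "st a \<in> laurent_O2"
  proof (induction rule: laurent_O2.induct)
    case (monomial x h)
    then show ?case
      by (simp add: st_mult st_upow upow_mult_O2_alg_mem star_alg.st)
  qed (simp_all add: st_add laurent_O2.intros)
qed

lemma closure_laurent_O2: "closure laurent_O2 = UNIV"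
proof -
  have "{u, s2} \<subseteq> closure laurent_O2"
    using laurent_O2.monomial[OF star_alg.one, of 1] laurent_O2.monomial[OF star_alg.generator, of s2 0]
      closure_subset by auto
  then show ?thesis
    using cstar_gen_minimal[OF _ star_subalgebra_closure[OF star_subalgebra_laurent_O2]] generated
    by blast
qed

lemma TV_alg_fixed: "a \<in> TV_alg \<Longrightarrow> \<sigma> a = a"
  using star_alg_minimal[of "{T, V}" "{a. \<sigma> a = a}"] cstar_subalgebra_fixed_points \<sigma>_T \<sigma>_V
  unfolding cstar_subalgebra_def by auto

lemma W_conj_TV_alg: "a \<in> TV_alg \<Longrightarrow> W * a * W \<in> TV_alg"
proof -
  interpret conj: star_endo sc st "\<lambda>a. W * a * W"
    by (rule star_endo_conj[OF st_W W_W])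
  have "(\<lambda>a. W * a * W) ` {T, V} = {T, V}"
    using W_T_W W_V_W by auto
  then show "a \<in> TV_alg \<Longrightarrow> W * a * W \<in> TV_alg"
    using conj.hom_star_alg by metis
qed

text \<open>Since conjugation by \<open>W\<close> swaps \<open>T\<close> and \<open>V\<close>, the elements \<open>a + b W\<close> with \<open>a, b \<in> TV_alg\<close>
  form a *-algebra.\<close>

lemma O2_alg_decomposition:
  assumes "x \<in> O2_alg"
  obtains a b where "a \<in> TV_alg" and "b \<in> TV_alg" and "x = a + b * W"
proof -
  note TV = star_subalgebra_star_alg[of "{T, V}"]
  let ?D = "{x. \<exists>a\<in>TV_alg. \<exists>b\<in>TV_alg. x = a + b * W}"
  have mem: "a + b * W \<in> ?D" if "a \<in> TV_alg" "b \<in> TV_alg" for a b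
    using that by blast
  have TV_scaleR: "r *\<^sub>R a \<in> TV_alg" if "a \<in> {T, V}" for r a
    using that by (intro star_subalgebra_scaleR[OF TV] star_alg.generator)
  have "s1 = (1 / sqrt 2) *\<^sub>R T + ((1 / sqrt 2) *\<^sub>R V) * W"
    by (subst s1_eq) (simp add: scaleR_add_right)
  also have "\<dots> \<in> ?D"
    by (intro mem TV_scaleR) simp_all
  finally have "s1 \<in> ?D" .
  have "s2 = (1 / sqrt 2) *\<^sub>R T + ((- (1 / sqrt 2)) *\<^sub>R V) * W"
    by (subst s2_eq) (simp add: scaleR_diff_right)
  also have "\<dots> \<in> ?D"
    by (intro mem TV_scaleR) simp_all
  finally have "{s1, s2} \<subseteq> ?D"
    using \<open>s1 \<in> ?D\<close> by simp
  moreover have "star_subalgebra ?D"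
    unfolding star_subalgebra_def
  proof (intro conjI ballI allI)
    show "1 \<in> ?D"
      using mem[OF star_subalgebra_one[OF TV] star_subalgebra_zero[OF TV]] by simp
    fix x y assume "x \<in> ?D" "y \<in> ?D"
    then obtain a b c d where abcd: "a \<in> TV_alg" "b \<in> TV_alg" "c \<in> TV_alg" "d \<in> TV_alg"
      and x: "x = a + b * W" and y: "y = c + d * W"
      by blast
    have "x + y = (a + c) + (b + d) * W"
      by (simp add: x y algebra_simps)
    also have "\<dots> \<in> ?D"
      using abcd by (intro mem star_subalgebra_add[OF TV])
    finally show "x + y \<in> ?D" .
    have "x * y = (a * c + b * (W * d * W)) + (a * d + b * (W * c * W)) * W"
      by (simp add: x y algebra_simps W_W)
    also have "\<dots> \<in> ?D"
      using abcd W_conj_TV_alg[of c] W_conj_TV_alg[of d]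
      by (intro mem) (simp_all add: star_subalgebra_add[OF TV] star_subalgebra_mult[OF TV])
    finally show "x * y \<in> ?D" .
  next
    fix k x assume "x \<in> ?D"
    then obtain a b where ab: "a \<in> TV_alg" "b \<in> TV_alg" and x: "x = a + b * W"
      by blast
    have "sc k x = sc k a + sc k b * W"
      by (simp add: x sc_add sc_multL)
    also have "\<dots> \<in> ?D"
      using ab by (intro mem star_subalgebra_sc[OF TV])
    finally show "sc k x \<in> ?D" .
  next
    fix x assume "x \<in> ?D"
    then obtain a b where ab: "a \<in> TV_alg" "b \<in> TV_alg" and x: "x = a + b * W"
      by blast
    have "st x = st a + (W * st b * W) * W"
      by (simp add: x st_add st_mult st_W mult.assoc W_W)
    also have "\<dots> \<in> ?D"
      using ab by (intro mem W_conj_TV_alg star_subalgebra_st[OF TV])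
    finally show "st x \<in> ?D" .
  qed
  ultimately have "x \<in> ?D"
    using star_alg_minimal[of "{s1, s2}" ?D] assms by blast
  then show ?thesis
    using that by blast
qed

lemma W_mult_u_diff: "W * (u - st u) = (-2) *\<^sub>R (st V * R * T)"
proof -
  have "R * s1 = s2 * u + s2"
    by (simp add: R_def s1_def distrib_right s2_u power2_eq_square mult.assoc st_u_u
        flip: mult.assoc[of "st u" u])
  moreover have "R * s2 = s1 + s1 * st u"
  proof -
    have "st u * s2 = st u * (s2 * u) * st u"
      by (simp add: mult.assoc u_st_u)
    also have "\<dots> = s1 * st u"
      by (simp add: s2_u power2_eq_square s1_def mult.assoc st_u_u flip: mult.assoc[of "st u" u])
    finally show ?thesis
      by (simp add: R_def s1_def distrib_right)
  qed
  ultimately have "(st s1 - st s2) * (R * (s1 + s2)) = st u - u"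
    by (simp add: distrib_left algebra_simps)
      (simp add: isometry_s1 isometry_s2 st_s1_s2 st_s2_s1 flip: mult.assoc)
  then have "st V * R * T = (1/2) *\<^sub>R (W * (st u - u))"
    by (simp add: V_def T_def st_scaleR st_mult st_diff st_W mult.assoc)
  then show ?thesis
    by (simp add: right_diff_distrib)
qed

lemma averages_mem_cstar_gen_TVR:
  assumes "x \<in> O2_alg"
  shows "x * upow st u h + \<sigma> x * upow st u (- h) \<in> cstar_gen sc st {T, V, R}"
    (is "_ \<in> ?K")
proof -
  note K = star_subalgebra_cstar_gen[of "{T, V, R}"]
  have T: "T \<in> ?K" and V: "V \<in> ?K" and R: "R \<in> ?K"
    by (simp_all add: cstar_gen_generator)
  obtain a b where ab: "a \<in> TV_alg" "b \<in> TV_alg" and x: "x = a + b * W"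
    using O2_alg_decomposition[OF assms] .
  have "\<sigma> x = a - b * W"
    using ab by (simp add: x hom_add hom_mult TV_alg_fixed \<sigma>_W)
  then have "x * upow st u h + \<sigma> x * upow st u (- h)
      = a * (upow st u h + upow st u (- h)) + b * (W * (upow st u h - upow st u (- h)))"
    by (simp only: x) (simp add: algebra_simps)
  also have "\<dots> \<in> ?K"
  proof -
    have "a \<in> ?K" "b \<in> ?K"
      using ab star_alg_minimal[OF _ K, of "{T, V}"] T V by auto
    moreover have "W * (u - st u) \<in> ?K"
      unfolding W_mult_u_diff
      using T V R by (intro star_subalgebra_scaleR[OF K] star_subalgebra_mult[OF K] star_subalgebra_st[OF K])
    moreover have "u + st u \<in> ?K"
      using R unfolding R_def .
    ultimately show ?thesis
      using upow_sum_diff_mem[OF K unitary_u]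
      by (simp add: star_subalgebra_add[OF K] star_subalgebra_mult[OF K])
  qed
  finally show ?thesis .
qed

lemma fixed_points_subsetI:
  assumes B: "cstar_subalgebra B"
    and avg: "\<And>x h. x \<in> O2_alg \<Longrightarrow> x * upow st u h + \<sigma> x * upow st u (- h) \<in> B"
  shows "{a. \<sigma> a = a} \<subseteq> B"
proof
  fix a assume "a \<in> {a. \<sigma> a = a}"
  moreover have "d + \<sigma> d \<in> B" if "d \<in> laurent_O2" for d
    using that
  proof (induction rule: laurent_O2.induct)
    case zero
    then show ?case
      using B star_subalgebra_zero unfolding cstar_subalgebra_def by simp
  next
    case (monomial x h)
    then show ?case
      using avg by (simp add: hom_mult \<sigma>_upow)
  next
    case (add a b)
    have "a + b + \<sigma> (a + b) = (a + \<sigma> a) + (b + \<sigma> b)"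
      by (simp add: hom_add algebra_simps)
    also have "\<dots> \<in> B"
      using add.IH B unfolding cstar_subalgebra_def by (blast intro: star_subalgebra_add)
    finally show ?case .
  qed
  ultimately show "a \<in> B"
    using fixed_point_mem[OF B closure_laurent_O2] by blast
qed

lemma fixed_points_eq_cstar_gen_TVR: "{a. \<sigma> a = a} = cstar_gen sc st {T, V, R}"
proof
  show "{a. \<sigma> a = a} \<subseteq> cstar_gen sc st {T, V, R}"
    by (rule fixed_points_subsetI[OF cstar_subalgebra_cstar_gen averages_mem_cstar_gen_TVR])
  show "cstar_gen sc st {T, V, R} \<subseteq> {a. \<sigma> a = a}"
    by (rule cstar_gen_minimal[OF _ cstar_subalgebra_fixed_points]) (simp add: \<sigma>_T \<sigma>_V \<sigma>_R)
qed

lemma \<sigma>_involutive_O2: "x \<in> cstar_gen sc st {s1, s2} \<Longrightarrow> \<sigma> (\<sigma> x) = x"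
proof -
  interpret \<sigma>\<sigma>: star_endo sc st "\<sigma> \<circ> \<sigma>"
    by (rule star_endo_comp) unfold_locales
  have "cstar_gen sc st {s1, s2} \<subseteq> {a. (\<sigma> \<circ> \<sigma>) a = a}"
    by (rule cstar_gen_minimal[OF _ \<sigma>\<sigma>.cstar_subalgebra_fixed_points]) (simp add: \<sigma>_s1 \<sigma>_s2 flip: s1_def)
  then show "x \<in> cstar_gen sc st {s1, s2} \<Longrightarrow> \<sigma> (\<sigma> x) = x"
    by auto
qed

lemma fixed_points_eq_cstar_gen_averages:
  "{a. \<sigma> a = a} = cstar_gen sc st
     {x * upow st u h + \<sigma> x * upow st u (- h) | x h. x \<in> cstar_gen sc st {s1, s2}}"
  (is "_ = cstar_gen sc st ?G")
proof
  show "{a. \<sigma> a = a} \<subseteq> cstar_gen sc st ?G"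
  proof (rule fixed_points_subsetI[OF cstar_subalgebra_cstar_gen])
    fix x h assume "x \<in> O2_alg"
    then have "x * upow st u h + \<sigma> x * upow st u (- h) \<in> ?G"
      using star_alg_subset_cstar_gen by blast
    then show "x * upow st u h + \<sigma> x * upow st u (- h) \<in> cstar_gen sc st ?G"
      by (rule cstar_gen_generator)
  qed
  have "\<sigma> y = y" if "y \<in> ?G" for y
  proof -
    obtain x h where y: "y = x * upow st u h + \<sigma> x * upow st u (- h)" and x: "x \<in> cstar_gen sc st {s1, s2}"
      using \<open>y \<in> ?G\<close> by blast
    show ?thesis
      by (simp add: y hom_add hom_mult \<sigma>_upow \<sigma>_involutive_O2[OF x] add.commute)
  qed
  then show "cstar_gen sc st ?G \<subseteq> {a. \<sigma> a = a}"
    by (intro cstar_gen_minimal[OF _ cstar_subalgebra_fixed_points]) auto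
qed

end

theorem theorem4p5:
  fixes sc :: "complex \<Rightarrow> 'a::{banach,real_normed_algebra_1} \<Rightarrow> 'a" and st :: "'a \<Rightarrow> 'a"
    and u s2 :: "'a" and \<sigma> :: "'a \<Rightarrow> 'a"
  assumes cstar: "cstar_algebra sc st"
    and gen: "cstar_gen sc st {u, s2} = UNIV"
    and unitary: "st u * u = 1" "u * st u = 1"
    and isometry: "st s2 * s2 = 1"
    and rel1: "s2 * u = u ^ 2 * s2"
    and rel2: "s2 * st s2 + u * s2 * st s2 * st u = 1"
    and aut: "star_automorphism sc st \<sigma>"
    and sigma_s2: "\<sigma> s2 = u * s2"
    and sigma_u: "\<sigma> u = st u"
  shows "{a. \<sigma> a = a} =
           cstar_gen sc st
             {scaleR (1 / sqrt 2) (u * s2 + s2),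
              scaleR (1 / sqrt 2) ((u * s2 - s2) * (u * s2 * st (u * s2) - s2 * st s2)),
              u + st u}
       \<and> {a. \<sigma> a = a} =
           cstar_gen sc st
             {x * upow st u h + \<sigma> x * upow st u (- h) | x h.
                x \<in> cstar_gen sc st {u * s2, s2}}"
proof -
  interpret Q2 sc st \<sigma> u s2
  proof (rule Q2.intro)
    show "star_endo sc st \<sigma>"
      by (rule cstar.star_endo_if_star_automorphism[OF cstar.intro[OF cstar] aut])
    then interpret star_endo sc st \<sigma> .
    show "Q2_axioms sc st \<sigma> u s2"
      by unfold_locales (simp_all add: unitary_def unitary isometry rel1 rel2 sigma_s2 sigma_u gen)
  qed
  show ?thesis
    using fixed_points_eq_cstar_gen_TVR fixed_points_eq_cstar_gen_averages
    by (simp add: T_def V_def W_def R_def s1_def)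
qed

end
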